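(* Let $q\in\,]0,1[$, $\omega\ge 0$, let $I$ be an interval containing $\omega_0:=\omega/(1-q)$, and let $f:I\to\mathbb{R}$ be continuous at $\omega_0$. For $x\in I$ define $F(x):=\int_{\omega_0}^{x}f(t)\,\tilde d_{q,\omega}t$. Then $F$ is continuous at $\omega_0$, and $\tilde D_{q,\omega}[F](x)$ exists for every $x\in I^{q,\omega}$ with $\tilde D_{q,\omega}[F](x)=f(x)$. Conversely, $$\int_a^b\tilde D_{q,\omega}[f](t)\,\tilde d_{q,\omega}t=f(b)-f(a)$$ for all $a,b\in I$.
   Context: $\sigma(t):=qt+\omega$, $\sigma^{-1}(t):=q^{-1}(t-\omega)$, $\sigma^k$ is the $k$-fold composition of $\sigma$, $f^{\sigma^k}:=f\circ\sigma^k$, and $I^{q,\omega}:=\{qt+\omega:t\in I\}$. Hahn symmetric derivative: for $t\in I^{q,\omega}\setminus\{\omega_0\}$, $\tilde D_{q,\omega}[f](t):=\frac{f(\sigma(t))-f(\sigma^{-1}(t))}{\sigma(t)-\sigma^{-1}(t)}$, and $\tilde D_{q,\omega}[f](\omega_0):=f'(\omega_0)$ (classical derivative) provided $f$ is differentiable at $\omega_0$. Hahn symmetric integral: for $x\in I$, $$\int_{\omega_0}^x f(t)\,\tilde d_{q,\omega}t:=\bigl(\sigma^{-1}(x)-\sigma(x)\bigr)\sum_{n=0}^{\infty}q^{2n+1}f(\sigma^{2n+1}(x)),$$ and for $a,b\in I$, $\int_a^b f(t)\,\tilde d_{q,\omega}t:=\int_{\omega_0}^b f(t)\,\tilde d_{q,\omega}t-\int_{\omega_0}^a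 f(t)\,\tilde d_{q,\omega}t$, provided the series converge at $x=a$ and $x=b$. *)

theory Defs
  imports "HOL-Analysis.Analysis"
begin

definition hsigma :: "real \<Rightarrow> real \<Rightarrow> real \<Rightarrow> real" where
  "hsigma q \<omega> t = q * t + \<omega>"

definition hsigma_inv :: "real \<Rightarrow> real \<Rightarrow> real \<Rightarrow> real" where
  "hsigma_inv q \<omega> t = (t - \<omega>) / q"

definition homega0 :: "real \<Rightarrow> real \<Rightarrow> real" where
  "homega0 q \<omega> = \<omega> / (1 - q)"

definition hahn_image :: "real \<Rightarrow> real \<Rightarrow> real set \<Rightarrow> real set" where
  "hahn_image q \<omega> I = (\<lambda>t. q * t + \<omega>) ` I"

definition hahn_series :: "real \<Rightarrow> real \<Rightarrow> (real \<Rightarrow> real) \<Rightarrow> real \<Rightarrow> nat \<Rightarrow> real" where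
  "hahn_series q \<omega> f x n = q ^ (2 * n + 1) * f ((hsigma q \<omega> ^^ (2 * n + 1)) x)"

text \<open>Hahn symmetric integral from omega0 to x (meaningful when the series converges).\<close>
definition hahn_int0 :: "real \<Rightarrow> real \<Rightarrow> (real \<Rightarrow> real) \<Rightarrow> real \<Rightarrow> real" where
  "hahn_int0 q \<omega> f x = (hsigma_inv q \<omega> x - hsigma q \<omega> x) * (\<Sum>n. hahn_series q \<omega> f x n)"

definition hahn_int :: "real \<Rightarrow> real \<Rightarrow> (real \<Rightarrow> real) \<Rightarrow> real \<Rightarrow> real \<Rightarrow> real" where
  "hahn_int q \<omega> f a b = hahn_int0 q \<omega> f b - hahn_int0 q \<omega> f a"

definition hahn_sderiv_at :: "real \<Rightarrow> real \<Rightarrow> real set \<Rightarrow> (real \<Rightarrow> real) \<Rightarrow> real \<Rightarrow> real \<Rightarrow> bool" where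
  "hahn_sderiv_at q \<omega> I F x d \<longleftrightarrow>
     (if x = homega0 q \<omega> then (F has_real_derivative d) (at x within I)
      else d = (F (hsigma q \<omega> x) - F (hsigma_inv q \<omega> x)) / (hsigma q \<omega> x - hsigma_inv q \<omega> x))"

definition hahn_sderiv :: "real \<Rightarrow> real \<Rightarrow> (real \<Rightarrow> real) \<Rightarrow> real \<Rightarrow> real" where
  "hahn_sderiv q \<omega> f t =
     (if t = homega0 q \<omega> then deriv f t
      else (f (hsigma q \<omega> t) - f (hsigma_inv q \<omega> t)) / (hsigma q \<omega> t - hsigma_inv q \<omega> t))"

end

theory Submission
  imports Defs
begin

text \<open>
  The point \<open>\<omega>\<^sub>0\<close> is the fixed point of \<open>\<sigma>\<close>, and \<open>\<sigma>^k x = \<omega>\<^sub>0 + q^k (x - \<omega>\<^sub>0)\<close>.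
  Hence the integral of \<open>f\<close> from \<open>\<omega>\<^sub>0\<close> to \<open>x\<close> is \<open>x - \<omega>\<^sub>0\<close> times a weighted average
  of the values of \<open>f\<close> at the points \<open>\<sigma>^(2n+1) x\<close>, which lie in \<open>I\<close> between \<open>\<omega>\<^sub>0\<close> and
  \<open>x\<close> and tend to \<open>\<omega>\<^sub>0\<close>. Continuity of \<open>f\<close> at \<open>\<omega>\<^sub>0\<close> makes these averages converge
  and tend to \<open>f \<omega>\<^sub>0\<close> as \<open>x \<rightarrow> \<omega>\<^sub>0\<close>, which is differentiability (hence continuity)
  at \<open>\<omega>\<^sub>0\<close>. Away from \<open>\<omega>\<^sub>0\<close>, passing from \<open>t\<close> to \<open>\<sigma>^2 t\<close> removes the first term
  of the series, which yields exactly the symmetric difference quotient at \<open>\<sigma> t\<close>.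
  Conversely, the series for the integral of the symmetric derivative telescopes along
  \<open>\<sigma>^(2n) a \<rightarrow> \<omega>\<^sub>0\<close>.
\<close>

lemma hsigma_eq:
  assumes "q \<noteq> 1"
  shows "hsigma q \<omega> x = homega0 q \<omega> + q * (x - homega0 q \<omega>)"
proof -
  have "1 - q \<noteq> 0" using assms by simp
  then have "homega0 q \<omega> * (1 - q) = \<omega>" by (simp add: homega0_def)
  then show ?thesis by (simp add: hsigma_def algebra_simps)
qed

lemma hsigma_inv_hsigma: "q \<noteq> 0 \<Longrightarrow> hsigma_inv q \<omega> (hsigma q \<omega> x) = x"
  by (simp add: hsigma_def hsigma_inv_def)

lemma hsigma_inv_minus_hsigma:
  "q \<noteq> 0 \<Longrightarrow> q \<noteq> 1 \<Longrightarrow> hsigma_inv q \<omega> x - hsigma q \<omega> x = (1 / q - q) * (x - homega0 q \<omega>)"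
  by (simp add: hsigma_def hsigma_inv_def homega0_def field_simps)

lemma hsigma_funpow: "q \<noteq> 1 \<Longrightarrow> (hsigma q \<omega> ^^ k) x = homega0 q \<omega> + q ^ k * (x - homega0 q \<omega>)"
proof (induction k)
  case (Suc k)
  have "(hsigma q \<omega> ^^ Suc k) x = hsigma q \<omega> ((hsigma q \<omega> ^^ k) x)" by simp
  also have "\<dots> = homega0 q \<omega> + q * ((hsigma q \<omega> ^^ k) x - homega0 q \<omega>)"
    using Suc.prems by (rule hsigma_eq)
  finally show ?case by (simp add: Suc.IH Suc.prems algebra_simps)
qed simp

lemma is_interval_contract_towards:
  fixes I :: "real set"
  assumes "is_interval I" "c \<in> I" "x \<in> I" "0 \<le> r" "r \<le> 1"
  shows "c + r * (x - c) \<in> I"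
proof -
  have "convex I" using assms(1) by (simp add: is_interval_convex_1)
  then have "(1 - r) *\<^sub>R c + r *\<^sub>R x \<in> I" using assms by (intro convexD_alt) auto
  then show ?thesis by (simp add: algebra_simps)
qed

lemma sums_weighted_mean_dist_le:
  fixes w a :: "nat \<Rightarrow> real"
  assumes w: "w sums 1" "\<And>n. 0 \<le> w n" and a: "\<And>n. \<bar>a n - L\<bar> \<le> e"
  shows "summable (\<lambda>n. w n * a n) \<and> \<bar>(\<Sum>n. w n * a n) - L\<bar> \<le> e"
proof -
  have bound: "\<bar>w n * (a n - L)\<bar> \<le> e * w n" for n
  proof -
    have "\<bar>w n * (a n - L)\<bar> = w n * \<bar>a n - L\<bar>" using w(2) by (simp add: abs_mult)
    also have "\<dots> \<le> w n * e" using a w(2) by (rule mult_left_mono)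
    finally show ?thesis by (simp only: mult.commute)
  qed
  have ew: "(\<lambda>n. e * w n) sums e"
    using sums_mult[OF w(1), of e] by simp
  then have ew_summable: "summable (\<lambda>n. e * w n)" by (rule sums_summable)
  have dev: "summable (\<lambda>n. \<bar>w n * (a n - L)\<bar>)"
    by (rule summable_comparison_test'[OF ew_summable]) (simp add: bound)
  then have dev_sums: "(\<lambda>n. w n * (a n - L)) sums (\<Sum>n. w n * (a n - L))"
    by (simp add: summable_rabs_cancel summable_sums)
  have "(\<lambda>n. L * w n + w n * (a n - L)) sums (L + (\<Sum>n. w n * (a n - L)))"
    using sums_add[OF sums_mult[OF w(1), of L] dev_sums] by simp
  then have wa: "(\<lambda>n. w n * a n) sums (L + (\<Sum>n. w n * (a n - L)))"
    by (simp add: algebra_simps)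
  have "\<bar>\<Sum>n. w n * (a n - L)\<bar> \<le> (\<Sum>n. \<bar>w n * (a n - L)\<bar>)"
    using dev by (rule summable_rabs)
  also have "\<dots> \<le> (\<Sum>n. e * w n)"
    using bound dev ew_summable by (rule suminf_le)
  also have "\<dots> = e"
    using ew by (rule sums_unique[symmetric])
  finally show ?thesis
    using wa by (simp add: sums_iff)
qed

lemma geometric_weights_sums:
  fixes q :: real
  assumes "0 < q" "q < 1"
  shows "(\<lambda>n. (1 - q\<^sup>2) * q ^ (2 * n)) sums 1"
proof -
  have q2: "\<bar>q\<^sup>2\<bar> < 1" using assms by (simp add: abs_square_less_1)
  then have "(\<lambda>n. (q\<^sup>2) ^ n) sums (1 / (1 - q\<^sup>2))" by (intro geometric_sums) simp
  then have "(\<lambda>n. (1 - q\<^sup>2) * (q\<^sup>2) ^ n) sums ((1 - q\<^sup>2) * (1 / (1 - q\<^sup>2)))" by (rule sums_mult)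
  moreover have "(1 - q\<^sup>2) * (1 / (1 - q\<^sup>2)) = 1" using q2 by simp
  ultimately show ?thesis by (simp only: power_mult)
qed

text \<open>Since \<open>(1/q - q) q^(2n+1) = (1 - q\<^sup>2) q^(2n)\<close>, this is the average of \<open>f\<close> over the
  points \<open>\<sigma>^(2n+1) x\<close> with the weights \<open>(1 - q\<^sup>2) q^(2n)\<close>, which sum to 1.\<close>

definition hahn_mean :: "real \<Rightarrow> real \<Rightarrow> (real \<Rightarrow> real) \<Rightarrow> real \<Rightarrow> real" where
  "hahn_mean q \<omega> f x = (1 / q - q) * suminf (hahn_series q \<omega> f x)"

context
  fixes q \<omega> :: real
  assumes q: "0 < q" "q < 1"
begin

lemma square_less_one: "q\<^sup>2 < 1"
  using q by (simp add: abs_square_less_1)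

lemma hahn_int0_eq_mean: "hahn_int0 q \<omega> f x = (x - homega0 q \<omega>) * hahn_mean q \<omega> f x"
  using q by (simp add: hahn_int0_def hahn_mean_def hsigma_inv_minus_hsigma)

lemma hsigma_funpow_in_interval:
  assumes "is_interval I" "homega0 q \<omega> \<in> I" "x \<in> I"
  shows "(hsigma q \<omega> ^^ k) x \<in> I"
  using assms q by (simp add: hsigma_funpow is_interval_contract_towards power_le_one)

lemma hsigma_funpow_dist_le:
  "\<bar>(hsigma q \<omega> ^^ k) x - homega0 q \<omega>\<bar> \<le> \<bar>x - homega0 q \<omega>\<bar>"
  using q by (simp add: hsigma_funpow abs_mult power_le_one mult_left_le_one_le)

lemma hsigma_funpow_tendsto: "(\<lambda>k. (hsigma q \<omega> ^^ k) x) \<longlonglongrightarrow> homega0 q \<omega>"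
proof -
  have "(\<lambda>k. homega0 q \<omega> + q ^ k * (x - homega0 q \<omega>)) \<longlonglongrightarrow> homega0 q \<omega> + 0 * (x - homega0 q \<omega>)"
    using q by (intro tendsto_intros LIMSEQ_power_zero) simp
  then show ?thesis using q by (simp add: hsigma_funpow)
qed

lemma hahn_mean_dist_le:
  assumes "\<And>n. \<bar>f ((hsigma q \<omega> ^^ (2 * n + 1)) x) - f (homega0 q \<omega>)\<bar> \<le> e"
  shows "summable (hahn_series q \<omega> f x) \<and> \<bar>hahn_mean q \<omega> f x - f (homega0 q \<omega>)\<bar> \<le> e"
proof -
  define w where "w n = (1 - q\<^sup>2) * q ^ (2 * n)" for n
  define a where "a n = f ((hsigma q \<omega> ^^ (2 * n + 1)) x)" for n
  have "0 < 1 - q\<^sup>2" using square_less_one by simp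
  then have mean: "summable (\<lambda>n. w n * a n) \<and> \<bar>(\<Sum>n. w n * a n) - f (homega0 q \<omega>)\<bar> \<le> e"
    using geometric_weights_sums[OF q] assms
    by (intro sums_weighted_mean_dist_le) (auto simp: w_def a_def)
  have L: "1 / q - q \<noteq> 0" using q \<open>0 < 1 - q\<^sup>2\<close> by (simp add: field_simps power2_eq_square)
  have "q ^ (2 * n + 1) = w n / (1 / q - q)" for n
    using q L by (simp add: w_def field_simps power2_eq_square)
  then have series: "hahn_series q \<omega> f x = (\<lambda>n. w n * a n / (1 / q - q))"
    by (simp add: fun_eq_iff hahn_series_def a_def)
  show ?thesis
    using mean L by (simp add: series hahn_mean_def summable_divide suminf_divide)
qed

lemma hsigma_hsigma_minus: "hsigma q \<omega> (hsigma q \<omega> t) - t = (q\<^sup>2 - 1) * (t - homega0 q \<omega>)"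
  using q by (simp add: hsigma_eq power2_eq_square algebra_simps)

lemma hahn_int0_hsigma_step:
  assumes "summable (hahn_series q \<omega> f t)"
  shows "hahn_int0 q \<omega> f (hsigma q \<omega> (hsigma q \<omega> t)) - hahn_int0 q \<omega> f t
           = (hsigma q \<omega> (hsigma q \<omega> t) - t) * f (hsigma q \<omega> t)"
proof -
  let ?c = "homega0 q \<omega>" and ?S = "suminf (hahn_series q \<omega> f t)"
  have q1: "q \<noteq> 1" using q by simp
  have hsigma2_minus: "hsigma q \<omega> (hsigma q \<omega> t) - ?c = q\<^sup>2 * (t - ?c)"
    by (simp add: hsigma_eq[OF q1] power2_eq_square)
  have shift: "hahn_series q \<omega> f (hsigma q \<omega> (hsigma q \<omega> t)) = (\<lambda>n. hahn_series q \<omega> f t (Suc n) / q\<^sup>2)"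
  proof
    fix n
    have pow: "q ^ (2 * Suc n + 1) = q ^ (2 * n + 1) * q\<^sup>2" by (simp add: power2_eq_square)
    have "(hsigma q \<omega> ^^ (2 * n + 1)) (hsigma q \<omega> (hsigma q \<omega> t)) = (hsigma q \<omega> ^^ (2 * Suc n + 1)) t"
      unfolding hsigma_funpow[OF q1] hsigma2_minus pow by (simp only: mult.assoc)
    then show "hahn_series q \<omega> f (hsigma q \<omega> (hsigma q \<omega> t)) n = hahn_series q \<omega> f t (Suc n) / q\<^sup>2"
      unfolding hahn_series_def pow using q by simp
  qed
  have "(\<lambda>n. hahn_series q \<omega> f t (Suc n)) sums (?S - hahn_series q \<omega> f t 0)"
    using assms sums_Suc_iff[of "hahn_series q \<omega> f t"] by (simp add: summable_sums)
  moreover have "hahn_series q \<omega> f t 0 = q * f (hsigma q \<omega> t)" by (simp add: hahn_series_def)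
  ultimately have "(\<lambda>n. hahn_series q \<omega> f t (Suc n)) sums (?S - q * f (hsigma q \<omega> t))"
    by simp
  then have suminf_hsigma2: "suminf (hahn_series q \<omega> f (hsigma q \<omega> (hsigma q \<omega> t))) = (?S - q * f (hsigma q \<omega> t)) / q\<^sup>2"
    unfolding shift by (rule sums_unique[symmetric, OF sums_divide])
  have "hahn_int0 q \<omega> f (hsigma q \<omega> (hsigma q \<omega> t)) - hahn_int0 q \<omega> f t
        = q\<^sup>2 * (t - ?c) * ((1 / q - q) * ((?S - q * f (hsigma q \<omega> t)) / q\<^sup>2)) - (t - ?c) * ((1 / q - q) * ?S)"
    by (simp only: hahn_int0_eq_mean hahn_mean_def suminf_hsigma2 hsigma2_minus)
  also have "\<dots> = (q\<^sup>2 * (t - ?c) - (t - ?c)) * f (hsigma q \<omega> t)"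
  proof -
    have "q\<^sup>2 * D * ((1 / q - q) * ((S - q * y) / q\<^sup>2)) - D * ((1 / q - q) * S) = (q\<^sup>2 * D - D) * y"
      for S y D :: real
      using q by (simp add: field_simps power2_eq_square)
    then show ?thesis .
  qed
  also have "\<dots> = (hsigma q \<omega> (hsigma q \<omega> t) - t) * f (hsigma q \<omega> t)"
    by (simp add: hsigma_hsigma_minus algebra_simps)
  finally show ?thesis .
qed

lemma f_hsigma_funpow_tendsto:
  assumes "is_interval I" "homega0 q \<omega> \<in> I" "continuous (at (homega0 q \<omega>) within I) f" "x \<in> I"
  shows "(\<lambda>k. f ((hsigma q \<omega> ^^ k) x)) \<longlonglongrightarrow> f (homega0 q \<omega>)"
  using continuous_within_tendsto_compose'[OF assms(3) hsigma_funpow_in_interval[OF assms(1,2,4)] hsigma_funpow_tendsto] .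

lemma hahn_series_summable:
  assumes "is_interval I" "homega0 q \<omega> \<in> I" "continuous (at (homega0 q \<omega>) within I) f" "x \<in> I"
  shows "summable (hahn_series q \<omega> f x)"
proof -
  have "(\<lambda>k. f ((hsigma q \<omega> ^^ k) x) - f (homega0 q \<omega>)) \<longlonglongrightarrow> 0"
    using f_hsigma_funpow_tendsto[OF assms] by (rule LIM_zero)
  then have "Bseq (\<lambda>k. f ((hsigma q \<omega> ^^ k) x) - f (homega0 q \<omega>))"
    by (rule convergent_imp_Bseq[OF convergentI])
  then obtain B where B: "\<And>k. \<bar>f ((hsigma q \<omega> ^^ k) x) - f (homega0 q \<omega>)\<bar> \<le> B"
    by (auto simp: Bseq_def)
  show ?thesis by (rule hahn_mean_dist_le[THEN conjunct1]) (rule B)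
qed

lemma hahn_mean_tendsto:
  assumes I: "is_interval I" "homega0 q \<omega> \<in> I" and cont: "continuous (at (homega0 q \<omega>) within I) f"
  shows "(hahn_mean q \<omega> f \<longlongrightarrow> f (homega0 q \<omega>)) (at (homega0 q \<omega>) within I)"
  unfolding Lim_within
proof (intro allI impI)
  let ?c = "homega0 q \<omega>"
  fix e :: real
  assume "0 < e"
  then have "0 < e / 2" by simp
  then obtain d where d: "0 < d" "\<And>y. y \<in> I \<Longrightarrow> dist y ?c < d \<Longrightarrow> dist (f y) (f ?c) < e / 2"
    using cont[unfolded continuous_within_eps_delta, rule_format] by blast
  have "dist (hahn_mean q \<omega> f x) (f ?c) < e" if x: "x \<in> I" "dist x ?c < d" for x
  proof -
    have close: "\<bar>f ((hsigma q \<omega> ^^ k) x) - f ?c\<bar> \<le> e / 2" for k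
    proof -
      have "dist ((hsigma q \<omega> ^^ k) x) ?c < d"
        using hsigma_funpow_dist_le[of k x] x(2) by (simp add: dist_real_def)
      then have "dist (f ((hsigma q \<omega> ^^ k) x)) (f ?c) < e / 2"
        by (rule d(2)[OF hsigma_funpow_in_interval[OF I x(1)]])
      then show ?thesis by (simp add: dist_real_def)
    qed
    have "\<bar>hahn_mean q \<omega> f x - f ?c\<bar> \<le> e / 2"
      by (rule hahn_mean_dist_le[THEN conjunct2]) (rule close)
    then show ?thesis using \<open>0 < e\<close> by (simp add: dist_real_def)
  qed
  then show "\<exists>d>0. \<forall>x\<in>I. 0 < dist x ?c \<and> dist x ?c < d \<longrightarrow> dist (hahn_mean q \<omega> f x) (f ?c) < e"
    using d(1) by blast
qed

lemma hahn_int0_has_derivative_at_fixpoint: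
  assumes "is_interval I" "homega0 q \<omega> \<in> I" "continuous (at (homega0 q \<omega>) within I) f"
  shows "(hahn_int0 q \<omega> f has_real_derivative f (homega0 q \<omega>)) (at (homega0 q \<omega>) within I)"
  unfolding has_field_derivative_iff
proof (rule Lim_transform_eventually[OF hahn_mean_tendsto[OF assms]])
  show "\<forall>\<^sub>F y in at (homega0 q \<omega>) within I.
          hahn_mean q \<omega> f y = (hahn_int0 q \<omega> f y - hahn_int0 q \<omega> f (homega0 q \<omega>)) / (y - homega0 q \<omega>)"
    by (simp add: eventually_at_filter hahn_int0_eq_mean)
qed

lemma hahn_sderiv_at_hahn_int0:
  assumes I: "is_interval I" "homega0 q \<omega> \<in> I" and cont: "continuous (at (homega0 q \<omega>) within I) f"
    and x: "x \<in> hahn_image q \<omega> I"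
  shows "hahn_sderiv_at q \<omega> I (hahn_int0 q \<omega> f) x (f x)"
proof (cases "x = homega0 q \<omega>")
  case True
  then show ?thesis
    using hahn_int0_has_derivative_at_fixpoint[OF I cont] by (simp add: hahn_sderiv_at_def)
next
  case False
  from x obtain t where t: "t \<in> I" "x = hsigma q \<omega> t" by (auto simp: hahn_image_def hsigma_def)
  have "t \<noteq> homega0 q \<omega>" using False q by (auto simp: t(2) hsigma_eq)
  moreover have "q\<^sup>2 \<noteq> 1" using square_less_one by simp
  ultimately have "hsigma q \<omega> x - t \<noteq> 0" by (simp add: t(2) hsigma_hsigma_minus)
  moreover have "hsigma_inv q \<omega> x = t" using q by (simp add: t(2) hsigma_inv_hsigma)
  ultimately show ?thesis
    using False hahn_int0_hsigma_step[OF hahn_series_summable[OF I cont t(1)]]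
    by (simp add: hahn_sderiv_at_def t(2)[symmetric])
qed

lemma hahn_series_hahn_sderiv:
  assumes "a \<noteq> homega0 q \<omega>"
  shows "hahn_series q \<omega> (hahn_sderiv q \<omega> f) a n
    = q / ((1 - q\<^sup>2) * (a - homega0 q \<omega>))
      * (f ((hsigma q \<omega> ^^ (2 * n)) a) - f ((hsigma q \<omega> ^^ (2 * Suc n)) a))"
proof -
  let ?c = "homega0 q \<omega>"
  have q0: "q \<noteq> 0" "q \<noteq> 1" using q by auto
  have "1 - q\<^sup>2 \<noteq> 0" using square_less_one by simp
  define lo where "lo = (hsigma q \<omega> ^^ (2 * n)) a"
  have lo: "lo - ?c = q ^ (2 * n) * (a - ?c)" by (simp add: lo_def hsigma_funpow[OF q0(2)])
  have "hsigma q \<omega> lo \<noteq> ?c" using lo assms q0 by (simp add: hsigma_eq[OF q0(2)])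
  then have "hahn_sderiv q \<omega> f (hsigma q \<omega> lo)
      = (f (hsigma q \<omega> (hsigma q \<omega> lo)) - f lo) / (hsigma q \<omega> (hsigma q \<omega> lo) - lo)"
    using q0 by (simp add: hahn_sderiv_def hsigma_inv_hsigma)
  also have "\<dots> = (f ((hsigma q \<omega> ^^ (2 * Suc n)) a) - f lo) / ((q\<^sup>2 - 1) * (q ^ (2 * n) * (a - ?c)))"
    unfolding hsigma_hsigma_minus lo by (simp add: lo_def)
  finally have quotient: "hahn_sderiv q \<omega> f (hsigma q \<omega> lo)
      = (f ((hsigma q \<omega> ^^ (2 * Suc n)) a) - f lo) / ((q\<^sup>2 - 1) * (q ^ (2 * n) * (a - ?c)))" .
  have cancel: "q * Q * ((G1 - G0) / ((q\<^sup>2 - 1) * (Q * D))) = q / ((1 - q\<^sup>2) * D) * (G0 - G1)"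
    if "Q \<noteq> 0" for Q D G0 G1 :: real
    using that \<open>1 - q\<^sup>2 \<noteq> 0\<close> by (cases "D = 0") (simp_all add: field_simps)
  have "q ^ (2 * n) \<noteq> 0" using q0 by simp
  have "hahn_series q \<omega> (hahn_sderiv q \<omega> f) a n = q * q ^ (2 * n) * hahn_sderiv q \<omega> f (hsigma q \<omega> lo)"
    by (simp add: hahn_series_def lo_def)
  also have "\<dots> = q / ((1 - q\<^sup>2) * (a - ?c)) * (f lo - f ((hsigma q \<omega> ^^ (2 * Suc n)) a))"
    unfolding quotient by (rule cancel[OF \<open>q ^ (2 * n) \<noteq> 0\<close>])
  finally show ?thesis unfolding lo_def .
qed

lemma hahn_int0_hahn_sderiv:
  assumes lim: "(\<lambda>k. f ((hsigma q \<omega> ^^ k) a)) \<longlonglongrightarrow> f (homega0 q \<omega>)"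
  shows "summable (hahn_series q \<omega> (hahn_sderiv q \<omega> f) a)
         \<and> hahn_int0 q \<omega> (hahn_sderiv q \<omega> f) a = f a - f (homega0 q \<omega>)"
proof (cases "a = homega0 q \<omega>")
  case True
  have q1: "q \<noteq> 1" using q by simp
  have "hahn_series q \<omega> (hahn_sderiv q \<omega> f) a = (\<lambda>n. q * hahn_sderiv q \<omega> f a * (q\<^sup>2) ^ n)"
    unfolding hahn_series_def hsigma_funpow[OF q1] True by (simp add: power_mult[symmetric] mult_ac)
  moreover have "summable (\<lambda>n. q * hahn_sderiv q \<omega> f a * (q\<^sup>2) ^ n)"
    using q square_less_one by (intro summable_mult summable_geometric) simp
  ultimately show ?thesis
    using True by (simp add: hahn_int0_eq_mean)
next
  case False
  let ?c = "homega0 q \<omega>"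
  have q0: "q \<noteq> 0" "q \<noteq> 1" using q by auto
  have "1 - q\<^sup>2 \<noteq> 0" using square_less_one by simp
  define K where "K = q / ((1 - q\<^sup>2) * (a - ?c))"
  define g where "g = (\<lambda>n. f ((hsigma q \<omega> ^^ (2 * n)) a))"
  have "g \<longlonglongrightarrow> f ?c"
    using LIMSEQ_subseq_LIMSEQ[OF lim, of "\<lambda>n. 2 * n"] by (simp add: g_def o_def strict_mono_def)
  then have "(\<lambda>n. K * (g n - g (Suc n))) sums (K * (f a - f ?c))"
    using telescope_sums'[of g] by (simp add: sums_mult g_def)
  moreover have "hahn_series q \<omega> (hahn_sderiv q \<omega> f) a = (\<lambda>n. K * (g n - g (Suc n)))"
    by (rule ext) (simp only: hahn_series_hahn_sderiv[OF False] g_def K_def)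
  ultimately have S: "hahn_series q \<omega> (hahn_sderiv q \<omega> f) a sums (K * (f a - f ?c))"
    by simp
  have LK: "(1 / q - q) * D * (q / ((1 - q\<^sup>2) * D)) = 1" if "D \<noteq> 0" for D
    using that q0 \<open>1 - q\<^sup>2 \<noteq> 0\<close> by (simp add: field_simps power2_eq_square)
  have "hahn_int0 q \<omega> (hahn_sderiv q \<omega> f) a = (1 / q - q) * (a - ?c) * (K * (f a - f ?c))"
    using S q0 by (simp add: hahn_int0_def hsigma_inv_minus_hsigma sums_iff)
  also have "\<dots> = ((1 / q - q) * (a - ?c) * K) * (f a - f ?c)"
    by (simp only: mult.assoc)
  also have "(1 / q - q) * (a - ?c) * K = 1"
    unfolding K_def by (rule LK) (use False in simp)
  finally show ?thesis
    using S by (simp add: sums_iff)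
qed

end

theorem theorem2p13:
  fixes q \<omega> :: real and I :: "real set" and f :: "real \<Rightarrow> real"
  assumes q: "0 < q" "q < 1"
    and \<omega>: "\<omega> \<ge> 0"
    and I: "is_interval I" "homega0 q \<omega> \<in> I"
    and cont: "continuous (at (homega0 q \<omega>) within I) f"
  shows "(\<forall>x\<in>I. summable (hahn_series q \<omega> f x))
     \<and> continuous (at (homega0 q \<omega>) within I) (hahn_int0 q \<omega> f)
     \<and> (\<forall>x\<in>hahn_image q \<omega> I. hahn_sderiv_at q \<omega> I (hahn_int0 q \<omega> f) x (f x))
     \<and> (\<forall>a\<in>I. \<forall>b\<in>I. summable (hahn_series q \<omega> (hahn_sderiv q \<omega> f) a)
           \<and> summable (hahn_series q \<omega> (hahn_sderiv q \<omega> f) b)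
           \<and> hahn_int q \<omega> (hahn_sderiv q \<omega> f) a b = f b - f a)"
  using hahn_series_summable[OF q I cont] hahn_sderiv_at_hahn_int0[OF q I cont]
    DERIV_continuous[OF hahn_int0_has_derivative_at_fixpoint[OF q I cont]]
    hahn_int0_hahn_sderiv[OF q f_hsigma_funpow_tendsto[OF q I cont]]
  by (simp add: hahn_int_def)

end
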